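(* Assume $\gamma_0$ is unimodal (and symmetric about $0$) with $\sup_u|\frac{d}{du}\log\gamma_0(u)|\le\Lambda$ a.e. and $\sup_u|\frac{d^2}{du^2}\log\gamma_0(u)|\le\Lambda'$ a.e. for some $\Lambda,\Lambda'>0$. Then there is a constant $C>0$ depending only on $\gamma_0$ such that for all $x\in\mathbb{R}$, $w\in(0,1]$, $c\in\mathbb{R}$, $$\left|\frac{d}{dx}\zeta(x;\theta)\right|\le C\bigl(1+|c|+\log(1/w)\bigr).$$ The same conclusion holds when $\gamma_0$ is the double exponential density $\gamma_0(u)=\frac{\Lambda}{2}e^{-\Lambda|u|}$.
   Context: Let $\phi$ be the standard normal density and $\gamma_0$ a probability density on $\mathbb{R}$. For $\theta=(w,c)$, $w\in(0,1]$, $c\in\mathbb{R}$, let $g(x;c)=\int\phi(x-\mu)\gamma_0(\mu-c)\,d\mu$, $m(x;\theta)=(1-w)\phi(x)+wg(x;c)$, and $\zeta(x;\theta)=x+\frac{d}{dx}\log m(x;\theta)$ (the posterior mean of $\mu$ given $X=x$ under $X\mid\mu\sim N(\mu,1)$ and prior $(1-w)\delta_0+w\gamma_0(\cdot-c)$). *)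

theory Defs
  imports "HOL-Analysis.Analysis"
begin

definition phi :: "real \<Rightarrow> real" where
  "phi x = exp (- (x\<^sup>2) / 2) / sqrt (2 * pi)"

definition gfun :: "(real \<Rightarrow> real) \<Rightarrow> real \<Rightarrow> real \<Rightarrow> real" where
  "gfun gamma0 c x = (LINT mu|lborel. phi (x - mu) * gamma0 (mu - c))"

definition mfun :: "(real \<Rightarrow> real) \<Rightarrow> real \<Rightarrow> real \<Rightarrow> real \<Rightarrow> real" where
  "mfun gamma0 w c x = (1 - w) * phi x + w * gfun gamma0 c x"

definition zeta :: "(real \<Rightarrow> real) \<Rightarrow> real \<Rightarrow> real \<Rightarrow> real \<Rightarrow> real" where
  "zeta gamma0 w c x = x + deriv (\<lambda>y. ln (mfun gamma0 w c y)) x"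

definition prob_density :: "(real \<Rightarrow> real) \<Rightarrow> bool" where
  "prob_density gamma0 \<longleftrightarrow> gamma0 \<in> borel_measurable borel \<and> (\<forall>u. 0 \<le> gamma0 u)
     \<and> integrable lborel gamma0 \<and> (LINT u|lborel. gamma0 u) = 1"

end

theory Submission
  imports Defs "HOL-Probability.Distributions"
begin

text \<open>
  The marginal \<open>m\<close> and its derivatives \<open>m'\<close>, \<open>m''\<close> mix \<open>\<phi>\<close>, \<open>\<phi>'\<close>, \<open>\<phi>''\<close> with their
  convolutions against the shifted prior, and \<open>\<zeta>' = (m + m'')/m - (m'/m)\<^sup>2\<close>. Because
  \<open>\<phi> + \<phi>'' = s\<^sup>2\<phi>\<close> and \<open>\<phi>' = -s\<phi>\<close>, the null component contributes a multiple of
  \<open>Q = x\<^sup>2 (1 - w) \<phi>(x) / m\<close>. If \<open>\<gamma>\<^sub>0 u \<le> \<gamma>\<^sub>0 v e\<^bsup>L|u - v|\<^esup>\<close>, every kernel dominated by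
  \<open>(1 + s\<^sup>2)\<phi>\<close>, convolved with \<open>\<gamma>\<^sub>0(\<cdot> - c)\<close>, is at most a constant times \<open>\<gamma>\<^sub>0(x - c)\<close>, while the
  convolution of \<open>\<phi>\<close> itself is at least a constant times \<open>\<gamma>\<^sub>0(x - c)\<close> and at most \<open>m/w\<close>; so the
  prior component is \<open>O(1)\<close>. Finally \<open>Q \<le> x\<^sup>2\<close>, which suffices while \<open>x\<^sup>2 \<lesssim> log(1/w) + |c|\<close>;
  for larger \<open>x\<close> the Gaussian decay of \<open>\<phi>(x)\<close> beats the lower bound
  \<open>m \<ge> const \<cdot> w \<gamma>\<^sub>0(0) e\<^bsup>-L(|x| + |c|)\<^esup>\<close>. Both priors of the theorem satisfy the growth
  condition with \<open>L = \<Lambda>\<close>.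
\<close>

section \<open>Convolutions on the real line\<close>

lemma convolution_has_real_derivative:
  fixes k k' h :: "real \<Rightarrow> real"
  assumes k_deriv: "\<And>s. (k has_real_derivative k' s) (at s)"
    and k_bound: "\<And>s. \<bar>k s\<bar> \<le> M" and k'_bound: "\<And>s. \<bar>k' s\<bar> \<le> M"
    and [measurable]: "k \<in> borel_measurable borel" "k' \<in> borel_measurable borel"
      "h \<in> borel_measurable borel"
    and h: "integrable lborel h"
  shows "((\<lambda>y. LINT \<mu>|lborel. k (y - \<mu>) * h \<mu>) has_real_derivative
           (LINT \<mu>|lborel. k' (x - \<mu>) * h \<mu>)) (at x)"
proof -
  have integrable_k: "integrable lborel (\<lambda>\<mu>. k (y - \<mu>) * h \<mu>)" for y
    by (rule Bochner_Integration.integrable_bound[OF integrable_mult_right[OF h, of M]])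
       (auto simp: abs_mult intro!: mult_right_mono order_trans[OF k_bound])
  have quotient_bound: "\<bar>(k a - k b) / (a - b)\<bar> \<le> M" if "a \<noteq> b" for a b
    using field_differentiable_bound[OF convex_UNIV, of k k' M a b] k_deriv k'_bound that
    by (auto simp: abs_divide divide_le_eq)
  define q where "q y \<mu> = (k (y - \<mu>) - k (x - \<mu>)) / (y - x) * h \<mu>" for y \<mu>
  have quotient_eq: "((LINT \<mu>|lborel. k (y - \<mu>) * h \<mu>) - (LINT \<mu>|lborel. k (x - \<mu>) * h \<mu>))
      / (y - x) = (LINT \<mu>|lborel. q y \<mu>)" for y
  proof -
    have "q y = (\<lambda>\<mu>. (k (y - \<mu>) * h \<mu> - k (x - \<mu>) * h \<mu>) / (y - x))"
      by (auto simp: q_def field_simps)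
    then show ?thesis using integrable_k by simp
  qed
  show ?thesis
    unfolding has_field_derivative_iff tendsto_at_iff_sequentially
  proof (intro allI impI)
    fix X :: "nat \<Rightarrow> real"
    assume X: "\<forall>i. X i \<in> UNIV - {x}" and X_lim: "X \<longlonglongrightarrow> x"
    have "(\<lambda>i. LINT \<mu>|lborel. q (X i) \<mu>) \<longlonglongrightarrow> (LINT \<mu>|lborel. k' (x - \<mu>) * h \<mu>)"
    proof (rule integral_dominated_convergence[where w="\<lambda>\<mu>. M * \<bar>h \<mu>\<bar>"])
      show "(\<lambda>\<mu>. k' (x - \<mu>) * h \<mu>) \<in> borel_measurable lborel"
        and "q (X i) \<in> borel_measurable lborel" for i
        unfolding q_def by measurable
      show "integrable lborel (\<lambda>\<mu>. M * \<bar>h \<mu>\<bar>)" using h by auto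
      show "AE \<mu> in lborel. (\<lambda>i. q (X i) \<mu>) \<longlonglongrightarrow> k' (x - \<mu>) * h \<mu>"
        unfolding q_def
      proof (intro AE_I2 tendsto_mult_right)
        fix \<mu>
        have "((\<lambda>y. (k y - k (x - \<mu>)) / (y - (x - \<mu>))) \<longlongrightarrow> k' (x - \<mu>)) (at (x - \<mu>))"
          using k_deriv[of "x - \<mu>"] unfolding has_field_derivative_iff .
        moreover have "\<forall>i. X i - \<mu> \<in> UNIV - {x - \<mu>}" using X by auto
        moreover have "(\<lambda>i. X i - \<mu>) \<longlonglongrightarrow> x - \<mu>" using X_lim by (intro tendsto_intros)
        ultimately have "((\<lambda>y. (k y - k (x - \<mu>)) / (y - (x - \<mu>))) \<circ> (\<lambda>i. X i - \<mu>))
            \<longlonglongrightarrow> k' (x - \<mu>)"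
          unfolding tendsto_at_iff_sequentially by (elim allE[where x="\<lambda>i. X i - \<mu>"] impE)
        then show "(\<lambda>i. (k (X i - \<mu>) - k (x - \<mu>)) / (X i - x)) \<longlonglongrightarrow> k' (x - \<mu>)"
          by (simp add: comp_def)
      qed
      show "AE \<mu> in lborel. norm (q (X i) \<mu>) \<le> M * \<bar>h \<mu>\<bar>" for i
      proof (intro AE_I2)
        fix \<mu>
        have "\<bar>(k (X i - \<mu>) - k (x - \<mu>)) / (X i - x)\<bar> \<le> M"
          using quotient_bound[of "X i - \<mu>" "x - \<mu>"] X by auto
        from mult_right_mono[OF this abs_ge_zero[of "h \<mu>"]]
        show "norm (q (X i) \<mu>) \<le> M * \<bar>h \<mu>\<bar>"
          by (simp only: q_def real_norm_def abs_mult)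
      qed
    qed
    then show "((\<lambda>y. ((LINT \<mu>|lborel. k (y - \<mu>) * h \<mu>) - (LINT \<mu>|lborel. k (x - \<mu>) * h \<mu>))
        / (y - x)) \<circ> X) \<longlonglongrightarrow> (LINT \<mu>|lborel. k' (x - \<mu>) * h \<mu>)"
      by (simp add: comp_def quotient_eq)
  qed
qed

lemma integrable_reflect_shift:
  fixes f :: "real \<Rightarrow> real"
  assumes "integrable lborel f"
  shows "integrable lborel (\<lambda>\<mu>. f (x - \<mu>))"
  using lborel_integrable_real_affine[OF assms, of "-1" x] by simp

lemma integral_reflect_shift:
  fixes f :: "real \<Rightarrow> real"
  shows "(LINT \<mu>|lborel. f (x - \<mu>)) = (LINT s|lborel. f s)"
  using lborel_integral_real_affine[of "-1" f x] by simp

lemma integrable_shift: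
  fixes f :: "real \<Rightarrow> real"
  assumes "integrable lborel f"
  shows "integrable lborel (\<lambda>\<mu>. f (\<mu> - c))"
  using lborel_integrable_real_affine[OF assms, of 1 "-c"] by simp

lemma integral_pos_lborel:
  fixes f :: "real \<Rightarrow> real"
  assumes [measurable]: "f \<in> borel_measurable borel"
    and f: "integrable lborel f" and pos: "\<And>s. 0 < f s"
  shows "0 < (LINT s|lborel. f s)"
proof -
  have nonneg: "AE s in lborel. 0 \<le> f s" using pos by (auto intro!: AE_I2 less_imp_le)
  have "(LINT s|lborel. f s) \<noteq> 0"
  proof
    assume "(LINT s|lborel. f s) = 0"
    then have "AE s in lborel. f s = 0"
      using integral_nonneg_eq_0_iff_AE[OF f nonneg] by simp
    then have "AE s::real in lborel. False"
      by (rule AE_mp) (use pos in \<open>auto intro!: AE_I2 simp: less_irrefl\<close>, metis less_irrefl)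
    then have "(UNIV::real set) \<in> null_sets lborel"
      using AE_iff_null[of "lborel::real measure" "\<lambda>x. False"] by simp
    then show False by (simp add: null_sets_def)
  qed
  moreover have "0 \<le> (LINT s|lborel. f s)" using nonneg by (rule integral_nonneg_AE)
  ultimately show ?thesis by simp
qed

section \<open>Gaussian kernels\<close>

definition phi' :: "real \<Rightarrow> real" where "phi' s = - s * phi s"

definition phi'' :: "real \<Rightarrow> real" where "phi'' s = (s\<^sup>2 - 1) * phi s"

definition gaussian_dominated :: "(real \<Rightarrow> real) \<Rightarrow> bool" where
  "gaussian_dominated k \<longleftrightarrow> k \<in> borel_measurable borel \<and> (\<forall>s. \<bar>k s\<bar> \<le> (1 + s\<^sup>2) * phi s)"

lemma phi_pos: "0 < phi s"
  by (simp add: phi_def)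

lemma phi_measurable [measurable]: "phi \<in> borel_measurable borel"
  unfolding phi_def by measurable

lemma phi'_measurable [measurable]: "phi' \<in> borel_measurable borel"
  unfolding phi'_def by measurable

lemma phi''_measurable [measurable]: "phi'' \<in> borel_measurable borel"
  unfolding phi''_def by measurable

lemma phi_has_real_derivative: "(phi has_real_derivative phi' s) (at s)"
proof -
  have sq: "sqrt (2 * pi) * sqrt (2 * pi) = 2 * pi" by simp
  have "exp (- (s\<^sup>2 / 2)) * s * sqrt (2 * pi) / (2 * pi) = exp (- (s\<^sup>2 / 2)) * s / sqrt (2 * pi)"
    by (subst sq[symmetric]) (simp add: field_simps)
  then have "((\<lambda>s. exp (- (s\<^sup>2) / 2) / sqrt (2 * pi)) has_real_derivative
      - s * (exp (- (s\<^sup>2) / 2) / sqrt (2 * pi))) (at s)"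
    by (auto intro!: derivative_eq_intros)
  then show ?thesis unfolding phi_def[abs_def] phi'_def by simp
qed

lemma phi'_has_real_derivative: "(phi' has_real_derivative phi'' s) (at s)"
proof -
  have "((\<lambda>s. - s * phi s) has_real_derivative (- 1 * phi s + phi' s * - s)) (at s)"
    by (rule DERIV_mult[OF DERIV_minus[OF DERIV_ident] phi_has_real_derivative])
  moreover have "- 1 * phi s + phi' s * - s = phi'' s"
    unfolding phi'_def phi''_def by (simp add: algebra_simps power2_eq_square)
  ultimately show ?thesis unfolding phi'_def[abs_def] by simp
qed

lemma phi_le_exp: "phi s \<le> exp (- (s\<^sup>2) / 2)"
proof -
  have "1 \<le> sqrt (2 * pi)" using pi_gt3 by (simp add: real_le_rsqrt)
  then show ?thesis unfolding phi_def
    using mult_left_mono[of 1 "sqrt (2 * pi)" "exp (- (s\<^sup>2) / 2)"] by (simp add: divide_le_eq)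
qed

lemma one_plus_sq_mult_phi_le: "(1 + s\<^sup>2) * phi s \<le> 2"
proof -
  have "(1 + s\<^sup>2) * phi s \<le> (1 + s\<^sup>2) * exp (- (s\<^sup>2 / 2))"
    using phi_le_exp[of s] by (intro mult_left_mono) auto
  also have "\<dots> \<le> 2 * (1 + s\<^sup>2 / 2) * exp (- (s\<^sup>2 / 2))"
    by (intro mult_right_mono) auto
  also have "\<dots> \<le> 2 * exp (s\<^sup>2 / 2) * exp (- (s\<^sup>2 / 2))"
    using exp_ge_add_one_self[of "s\<^sup>2 / 2"] by (intro mult_right_mono mult_left_mono) auto
  also have "\<dots> = 2" by (simp add: exp_minus)
  finally show ?thesis .
qed

lemma gaussian_dominated_bound: "gaussian_dominated k \<Longrightarrow> \<bar>k s\<bar> \<le> 2"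
  unfolding gaussian_dominated_def using one_plus_sq_mult_phi_le[of s] by (meson order_trans)

lemma gaussian_dominated_phi: "gaussian_dominated phi"
  unfolding gaussian_dominated_def using phi_pos by (auto simp: less_imp_le)

lemma gaussian_dominated_phi': "gaussian_dominated phi'"
proof -
  have "\<bar>s\<bar> \<le> 1 + s\<^sup>2" for s :: real
    using sum_squares_ge_zero[of "\<bar>s\<bar> - 1" 0] by (simp add: power2_eq_square algebra_simps)
  then show ?thesis
    unfolding gaussian_dominated_def phi'_def using phi_pos
    by (simp add: abs_mult mult_right_mono less_imp_le)
qed

lemma gaussian_dominated_phi'': "gaussian_dominated phi''"
proof -
  have "\<bar>s\<^sup>2 - 1\<bar> \<le> 1 + s\<^sup>2" for s :: real
    using zero_le_power2[of s] by linarith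
  then show ?thesis
    unfolding gaussian_dominated_def phi''_def using phi_pos
    by (simp add: abs_mult mult_right_mono less_imp_le)
qed

lemma gaussian_dominated_sq_phi: "gaussian_dominated (\<lambda>s. s\<^sup>2 * phi s)"
  unfolding gaussian_dominated_def using phi_pos by (simp add: abs_mult less_imp_le)

definition gauss_tail :: "real \<Rightarrow> real \<Rightarrow> real" where
  "gauss_tail L s = (1 + s\<^sup>2) * phi s * exp (L * \<bar>s\<bar>)"

lemma gauss_tail_measurable [measurable]: "gauss_tail L \<in> borel_measurable borel"
  unfolding gauss_tail_def by measurable

lemma gauss_tail_nonneg: "0 \<le> gauss_tail L s"
  unfolding gauss_tail_def using phi_pos[of s] by simp

lemma gauss_tail_le: "gauss_tail L s \<le> 9 * exp (4 * L\<^sup>2) * exp (- (s\<^sup>2 / 4))"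
proof -
  have "L * \<bar>s\<bar> \<le> s\<^sup>2 / 16 + 4 * L\<^sup>2"
    using sum_squares_ge_zero[of "\<bar>s\<bar> / 4 - 2 * L" 0] by (simp add: power2_eq_square algebra_simps)
  moreover have "1 + s\<^sup>2 \<le> 9 * exp (s\<^sup>2 / 8)"
    using exp_ge_add_one_self[of "s\<^sup>2 / 8"] zero_le_power2[of s] by linarith
  ultimately have "gauss_tail L s \<le> (9 * exp (s\<^sup>2 / 8)) * exp (- (s\<^sup>2) / 2) * exp (s\<^sup>2 / 16 + 4 * L\<^sup>2)"
    unfolding gauss_tail_def using phi_le_exp[of s] phi_pos[of s] by (intro mult_mono) auto
  also have "\<dots> = 9 * exp (4 * L\<^sup>2) * exp (- (5 * s\<^sup>2) / 16)"
    by (simp add: mult_exp_exp[symmetric] del: mult_exp_exp) (simp add: mult_exp_exp field_simps)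
  also have "\<dots> \<le> 9 * exp (4 * L\<^sup>2) * exp (- (s\<^sup>2 / 4))"
    by (intro mult_left_mono) auto
  finally show ?thesis .
qed

lemma integrable_exp_neg_sq_quarter: "integrable lborel (\<lambda>s::real. exp (- (s\<^sup>2 / 4)))"
proof -
  have "integrable lborel (\<lambda>s. sqrt (4 * pi) * normal_density 0 (sqrt 2) s)" by auto
  moreover have "sqrt (4 * pi) * normal_density 0 (sqrt 2) s = exp (- (s\<^sup>2 / 4))" for s
    unfolding normal_density_def by simp
  ultimately show ?thesis by simp
qed

lemma integrable_gauss_tail: "integrable lborel (gauss_tail L)"
  by (rule Bochner_Integration.integrable_bound
        [OF integrable_mult_right[OF integrable_exp_neg_sq_quarter, of "9 * exp (4 * L\<^sup>2)"]])
     (auto intro!: AE_I2 simp: gauss_tail_nonneg gauss_tail_le)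

lemma one_plus_log_second_deriv_bound:
  fixes m m' m'' a x R :: real
  assumes m: "0 < m" and a: "0 \<le> a" "a \<le> m" and R: "0 \<le> R"
    and second: "\<bar>m + m'' - x\<^sup>2 * a\<bar> \<le> R * m" and first: "\<bar>m' + x * a\<bar> \<le> R * m"
  shows "\<bar>1 + (m'' * m - m' * m') / (m * m)\<bar> \<le> 3 * (x\<^sup>2 * a / m) + R + 2 * R\<^sup>2"
proof -
  define Q where "Q = x\<^sup>2 * a / m"
  define P where "P = \<bar>x\<bar> * a / m"
  have P_sq: "P\<^sup>2 \<le> Q"
  proof -
    have "P\<^sup>2 = Q * (a / m)" unfolding P_def Q_def by (simp add: power2_eq_square power_divide)
    also have "\<dots> \<le> Q * 1"
      using a m unfolding Q_def by (intro mult_left_mono) (auto simp: divide_le_eq)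
    finally show ?thesis by simp
  qed
  have "\<bar>m + m''\<bar> \<le> x\<^sup>2 * a + R * m"
    using second mult_nonneg_nonneg[OF zero_le_power2[of x] a(1)] by (simp add: abs_le_iff)
  then have "\<bar>m + m''\<bar> / m \<le> (x\<^sup>2 * a + R * m) / m"
    using m by (simp add: divide_right_mono)
  then have ratio2: "\<bar>m + m''\<bar> / m \<le> Q + R"
    using m unfolding Q_def by (simp add: add_divide_distrib)
  have "\<bar>m'\<bar> \<le> \<bar>x\<bar> * a + R * m"
    using first abs_triangle_ineq4[of "m' + x * a" "x * a"] a by (simp add: abs_mult)
  then have "\<bar>m'\<bar> / m \<le> (\<bar>x\<bar> * a + R * m) / m"
    using m by (simp add: divide_right_mono)
  then have "\<bar>m' / m\<bar> \<le> P + R"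
    using m unfolding P_def by (simp add: add_divide_distrib abs_divide)
  then have "(m' / m)\<^sup>2 \<le> (P + R)\<^sup>2"
    by (metis abs_ge_zero power2_abs power_mono)
  also have "\<dots> \<le> 2 * P\<^sup>2 + 2 * R\<^sup>2"
    using sum_squares_ge_zero[of "P - R" 0] by (simp add: power2_eq_square algebra_simps)
  finally have ratio1: "(m' / m)\<^sup>2 \<le> 2 * Q + 2 * R\<^sup>2" using P_sq by linarith
  have "1 + (m'' * m - m' * m') / (m * m) = (m + m'') / m - (m' / m)\<^sup>2"
    using m by (simp add: field_simps power2_eq_square)
  also have "\<bar>\<dots>\<bar> \<le> \<bar>(m + m'') / m\<bar> + (m' / m)\<^sup>2"
    using abs_triangle_ineq4[of "(m + m'') / m" "(m' / m)\<^sup>2"] by simp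
  also have "\<bar>(m + m'') / m\<bar> = \<bar>m + m''\<bar> / m"
    by (simp only: abs_divide abs_of_pos[OF m])
  finally show ?thesis using ratio1 ratio2 unfolding Q_def[symmetric] by linarith
qed

section \<open>Convolving Gaussian kernels with a log-Lipschitz density\<close>

locale log_lipschitz_density =
  fixes \<gamma> :: "real \<Rightarrow> real" and L :: real
  assumes measurable_density [measurable]: "\<gamma> \<in> borel_measurable borel"
    and density_pos: "\<And>u. 0 < \<gamma> u"
    and integrable_density: "integrable lborel \<gamma>"
    and L_pos: "0 < L"
    and density_growth: "\<And>u v. \<gamma> u \<le> \<gamma> v * exp (L * \<bar>u - v\<bar>)"
begin

definition conv :: "(real \<Rightarrow> real) \<Rightarrow> real \<Rightarrow> real \<Rightarrow> real" where
  "conv k c y = (LINT \<mu>|lborel. k (y - \<mu>) * \<gamma> (\<mu> - c))"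

definition conv_upper :: real where
  "conv_upper = (LINT s|lborel. gauss_tail L s)"

definition conv_lower :: real where
  "conv_lower = (LINT s|lborel. phi s * exp (- (L * \<bar>s\<bar>)))"

lemma density_growth_lower: "\<gamma> v * exp (- (L * \<bar>u - v\<bar>)) \<le> \<gamma> u"
proof -
  have "\<gamma> v * exp (- (L * \<bar>u - v\<bar>)) \<le> \<gamma> u * exp (L * \<bar>v - u\<bar>) * exp (- (L * \<bar>u - v\<bar>))"
    using density_growth[of v u] by (intro mult_right_mono) auto
  also have "\<dots> = \<gamma> u" by (simp add: abs_minus_commute exp_minus)
  finally show ?thesis .
qed

lemma integrable_conv_integrand:
  assumes [measurable]: "k \<in> borel_measurable borel" and k_bound: "\<And>s. \<bar>k s\<bar> \<le> M"
  shows "integrable lborel (\<lambda>\<mu>. k (x - \<mu>) * \<gamma> (\<mu> - c))"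
  by (rule Bochner_Integration.integrable_bound
        [OF integrable_mult_right[OF integrable_shift[OF integrable_density], of M]])
     (auto intro!: AE_I2 simp: abs_mult intro!: mult_right_mono order_trans[OF k_bound])

lemma conv_phi_has_real_derivative: "(conv phi c has_real_derivative conv phi' c x) (at x)"
  unfolding conv_def[abs_def]
  using gaussian_dominated_bound[OF gaussian_dominated_phi]
    gaussian_dominated_bound[OF gaussian_dominated_phi']
  by (intro convolution_has_real_derivative[OF phi_has_real_derivative]
      integrable_shift[OF integrable_density]) auto

lemma conv_phi'_has_real_derivative: "(conv phi' c has_real_derivative conv phi'' c x) (at x)"
  unfolding conv_def[abs_def]
  using gaussian_dominated_bound[OF gaussian_dominated_phi']
    gaussian_dominated_bound[OF gaussian_dominated_phi'']
  by (intro convolution_has_real_derivative[OF phi'_has_real_derivative]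
      integrable_shift[OF integrable_density]) auto

lemma conv_phi_add_conv_phi'': "conv phi c x + conv phi'' c x = conv (\<lambda>s. s\<^sup>2 * phi s) c x"
proof -
  have "conv phi c x + conv phi'' c x
      = (LINT \<mu>|lborel. phi (x - \<mu>) * \<gamma> (\<mu> - c) + phi'' (x - \<mu>) * \<gamma> (\<mu> - c))"
    unfolding conv_def
    using gaussian_dominated_bound[OF gaussian_dominated_phi]
      gaussian_dominated_bound[OF gaussian_dominated_phi'']
    by (intro Bochner_Integration.integral_add[symmetric] integrable_conv_integrand) auto
  also have "\<dots> = conv (\<lambda>s. s\<^sup>2 * phi s) c x"
    unfolding conv_def phi''_def by (simp add: algebra_simps)
  finally show ?thesis .
qed

text \<open>The growth condition moves \<open>\<gamma>(\<mu> - c)\<close> to \<open>\<gamma>(x - c)\<close> at the price of \<open>e\<^bsup>L|x - \<mu>|\<^esup>\<close>,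
  which the Gaussian factor absorbs.\<close>

lemma abs_conv_le:
  assumes k: "gaussian_dominated k"
  shows "\<bar>conv k c x\<bar> \<le> conv_upper * \<gamma> (x - c)"
proof -
  have [measurable]: "k \<in> borel_measurable borel" using k by (simp add: gaussian_dominated_def)
  have pointwise: "\<bar>k (x - \<mu>) * \<gamma> (\<mu> - c)\<bar> \<le> gauss_tail L (x - \<mu>) * \<gamma> (x - c)" for \<mu>
  proof -
    have "\<bar>k (x - \<mu>) * \<gamma> (\<mu> - c)\<bar> = \<bar>k (x - \<mu>)\<bar> * \<gamma> (\<mu> - c)"
      using density_pos[of "\<mu> - c"] by (simp add: abs_mult)
    also have "\<dots> \<le> ((1 + (x - \<mu>)\<^sup>2) * phi (x - \<mu>)) * (\<gamma> (x - c) * exp (L * \<bar>x - \<mu>\<bar>))"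
      using density_growth[of "\<mu> - c" "x - c"] k density_pos[of "\<mu> - c"]
      by (intro mult_mono) (auto simp: abs_minus_commute gaussian_dominated_def less_imp_le[OF phi_pos])
    also have "\<dots> = gauss_tail L (x - \<mu>) * \<gamma> (x - c)" unfolding gauss_tail_def by simp
    finally show ?thesis .
  qed
  have "\<bar>conv k c x\<bar> \<le> (LINT \<mu>|lborel. \<bar>k (x - \<mu>) * \<gamma> (\<mu> - c)\<bar>)"
    unfolding conv_def by (rule integral_abs_bound)
  also have "\<dots> \<le> (LINT \<mu>|lborel. gauss_tail L (x - \<mu>) * \<gamma> (x - c))"
    using pointwise integrable_reflect_shift[OF integrable_gauss_tail]
      integrable_conv_integrand[of k 2 x c] gaussian_dominated_bound[OF k]
    by (intro integral_mono) auto
  also have "\<dots> = conv_upper * \<gamma> (x - c)"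
    unfolding conv_upper_def using integral_reflect_shift[of "gauss_tail L" x] by simp
  finally show ?thesis .
qed

lemma integrable_phi_exp_neg: "integrable lborel (\<lambda>s. phi s * exp (- (L * \<bar>s\<bar>)))"
proof (rule Bochner_Integration.integrable_bound[OF integrable_gauss_tail[of L]])
  show "(\<lambda>s. phi s * exp (- (L * \<bar>s\<bar>))) \<in> borel_measurable lborel" by measurable
  have "phi s * exp (- (L * \<bar>s\<bar>)) \<le> gauss_tail L s" for s
  proof -
    have "phi s * exp (- (L * \<bar>s\<bar>)) \<le> phi s * 1"
      using phi_pos[of s] L_pos by (intro mult_left_mono) auto
    also have "\<dots> \<le> gauss_tail L s"
      unfolding gauss_tail_def using phi_pos[of s] L_pos
      by (intro mult_mono) (auto simp: mult_le_cancel_right1)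
    finally show ?thesis .
  qed
  then show "AE s in lborel. norm (phi s * exp (- (L * \<bar>s\<bar>))) \<le> norm (gauss_tail L s)"
    using phi_pos by (auto intro!: AE_I2 simp: less_imp_le abs_of_nonneg[OF gauss_tail_nonneg])
qed

lemma conv_lower_pos: "0 < conv_lower"
  unfolding conv_lower_def using phi_pos
  by (intro integral_pos_lborel integrable_phi_exp_neg) auto

lemma conv_upper_nonneg: "0 \<le> conv_upper"
  unfolding conv_upper_def by (rule integral_nonneg_AE) (simp add: gauss_tail_nonneg)

lemma conv_phi_ge: "conv_lower * \<gamma> (x - c) \<le> conv phi c x"
proof -
  have "conv_lower * \<gamma> (x - c)
      = (LINT \<mu>|lborel. phi (x - \<mu>) * exp (- (L * \<bar>x - \<mu>\<bar>)) * \<gamma> (x - c))"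
    unfolding conv_lower_def
    using integral_reflect_shift[of "\<lambda>s. phi s * exp (- (L * \<bar>s\<bar>))" x] by simp
  also have "\<dots> \<le> conv phi c x"
    unfolding conv_def
  proof (rule integral_mono)
    show "integrable lborel (\<lambda>\<mu>. phi (x - \<mu>) * exp (- (L * \<bar>x - \<mu>\<bar>)) * \<gamma> (x - c))"
      using integrable_reflect_shift[OF integrable_phi_exp_neg, of x] by simp
    show "integrable lborel (\<lambda>\<mu>. phi (x - \<mu>) * \<gamma> (\<mu> - c))"
      using gaussian_dominated_bound[OF gaussian_dominated_phi]
      by (intro integrable_conv_integrand) auto
    fix \<mu>
    have "exp (- (L * \<bar>x - \<mu>\<bar>)) * \<gamma> (x - c) \<le> \<gamma> (\<mu> - c)"
      using density_growth_lower[of "x - c" "\<mu> - c"] by (simp add: abs_minus_commute mult.commute)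
    then show "phi (x - \<mu>) * exp (- (L * \<bar>x - \<mu>\<bar>)) * \<gamma> (x - c) \<le> phi (x - \<mu>) * \<gamma> (\<mu> - c)"
      using phi_pos[of "x - \<mu>"] by (simp add: mult.assoc mult_left_mono)
  qed
  finally show ?thesis .
qed


definition marginal :: "real \<Rightarrow> real \<Rightarrow> real \<Rightarrow> real" where
  "marginal w c y = (1 - w) * phi y + w * conv phi c y"

definition marginal' :: "real \<Rightarrow> real \<Rightarrow> real \<Rightarrow> real" where
  "marginal' w c y = (1 - w) * phi' y + w * conv phi' c y"

definition marginal'' :: "real \<Rightarrow> real \<Rightarrow> real \<Rightarrow> real" where
  "marginal'' w c y = (1 - w) * phi'' y + w * conv phi'' c y"

lemma mfun_eq_marginal: "mfun \<gamma> w c = marginal w c"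
  unfolding mfun_def[abs_def] gfun_def marginal_def conv_def by simp

lemma conv_phi_pos: "0 < conv phi c y"
  using conv_phi_ge[of y c] conv_lower_pos density_pos[of "y - c"] by (smt (verit) mult_pos_pos)

lemma marginal_ge_conv_phi: "0 \<le> w \<Longrightarrow> w \<le> 1 \<Longrightarrow> w * conv phi c y \<le> marginal w c y"
  unfolding marginal_def using phi_pos[of y] by simp

lemma marginal_ge_null: "0 \<le> w \<Longrightarrow> (1 - w) * phi y \<le> marginal w c y"
  unfolding marginal_def using conv_phi_pos[of c y] by simp

lemma marginal_pos: "0 < w \<Longrightarrow> w \<le> 1 \<Longrightarrow> 0 < marginal w c y"
  using marginal_ge_conv_phi[of w c y] conv_phi_pos[of c y] by (smt (verit) mult_pos_pos)

lemma marginal_has_real_derivative: "(marginal w c has_real_derivative marginal' w c y) (at y)"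
  unfolding marginal_def[abs_def] marginal'_def
  by (intro DERIV_add DERIV_cmult phi_has_real_derivative conv_phi_has_real_derivative)

lemma marginal'_has_real_derivative: "(marginal' w c has_real_derivative marginal'' w c y) (at y)"
  unfolding marginal'_def[abs_def] marginal''_def
  by (intro DERIV_add DERIV_cmult phi'_has_real_derivative conv_phi'_has_real_derivative)

lemma zeta_eq:
  assumes "0 < w" "w \<le> 1"
  shows "zeta \<gamma> w c = (\<lambda>y. y + marginal' w c y / marginal w c y)"
proof
  fix y
  have "((\<lambda>y. ln (marginal w c y)) has_real_derivative
      1 / marginal w c y * marginal' w c y) (at y)"
    by (rule DERIV_chain2[OF DERIV_ln_divide[OF marginal_pos[OF assms]]
          marginal_has_real_derivative])
  then show "zeta \<gamma> w c y = y + marginal' w c y / marginal w c y"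
    unfolding zeta_def mfun_eq_marginal by (simp add: DERIV_imp_deriv)
qed

lemma zeta_has_real_derivative:
  assumes "0 < w" "w \<le> 1"
  shows "(zeta \<gamma> w c has_real_derivative
     1 + (marginal'' w c x * marginal w c x - marginal' w c x * marginal' w c x)
       / (marginal w c x * marginal w c x)) (at x)"
  unfolding zeta_eq[OF assms] using marginal_pos[OF assms, of c x]
  by (intro DERIV_add DERIV_ident DERIV_divide marginal'_has_real_derivative
      marginal_has_real_derivative) auto

lemma weighted_conv_le:
  assumes k: "gaussian_dominated k" and w: "0 < w" "w \<le> 1"
  shows "w * \<bar>conv k c x\<bar> \<le> conv_upper / conv_lower * marginal w c x"
proof -
  have ratio: "0 \<le> conv_upper / conv_lower"
    using conv_upper_nonneg conv_lower_pos by simp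
  have "w * \<bar>conv k c x\<bar> \<le> w * (conv_upper * \<gamma> (x - c))"
    using abs_conv_le[OF k] w by (intro mult_left_mono) auto
  also have "\<dots> = conv_upper / conv_lower * (w * (conv_lower * \<gamma> (x - c)))"
    using conv_lower_pos by simp
  also have "\<dots> \<le> conv_upper / conv_lower * (w * conv phi c x)"
    using conv_phi_ge w ratio by (intro mult_left_mono) auto
  also have "\<dots> \<le> conv_upper / conv_lower * marginal w c x"
    using marginal_ge_conv_phi w ratio by (intro mult_left_mono) auto
  finally show ?thesis .
qed

lemma null_ratio_le_sq:
  assumes "0 < w" "w \<le> 1"
  shows "x\<^sup>2 * ((1 - w) * phi x) / marginal w c x \<le> x\<^sup>2"
  using marginal_ge_null[of w x c] marginal_pos[OF assms, of c x] assms
  by (simp add: divide_le_eq mult_left_mono)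

text \<open>Once \<open>x\<^sup>2/4 \<ge> ln(1/w) + L|c|\<close>, the factor \<open>e\<^bsup>-x\<^sup>2/4\<^esup>\<close> left over from the Gaussian
  tail pays for both \<open>1/w\<close> and the \<open>e\<^bsup>L|c|\<^esup>\<close> lost in bounding \<open>\<gamma>(x - c)\<close> below.\<close>

lemma null_ratio_le_const:
  assumes w: "0 < w" "w \<le> 1" and large: "ln (1 / w) + L * \<bar>c\<bar> \<le> x\<^sup>2 / 4"
  shows "x\<^sup>2 * ((1 - w) * phi x) / marginal w c x \<le> 9 * exp (4 * L\<^sup>2) / (\<gamma> 0 * conv_lower)"
proof -
  define G where "G = \<gamma> (x - c)"
  have G: "0 < G" unfolding G_def by (rule density_pos)
  have B: "0 < conv_lower" by (rule conv_lower_pos)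
  have \<gamma>0: "0 < \<gamma> 0" by (rule density_pos)
  have G_lower: "\<gamma> 0 \<le> G * (exp (L * \<bar>x\<bar>) * exp (L * \<bar>c\<bar>))"
  proof -
    have "exp (L * \<bar>x - c\<bar>) \<le> exp (L * \<bar>x\<bar>) * exp (L * \<bar>c\<bar>)"
      using L_pos abs_triangle_ineq4[of x c]
      by (simp add: mult_exp_exp distrib_left[symmetric] mult_left_mono)
    then show ?thesis
      using density_growth[of 0 "x - c"] G unfolding G_def by (smt (verit) mult_left_mono)
  qed
  have tail: "x\<^sup>2 * phi x * exp (L * \<bar>x\<bar>) * exp (L * \<bar>c\<bar>) \<le> 9 * exp (4 * L\<^sup>2) * w"
  proof -
    have "exp (- (x\<^sup>2 / 4)) * exp (L * \<bar>c\<bar>) \<le> exp (- ln (1 / w))"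
      using large by (simp add: mult_exp_exp)
    also have "\<dots> = w" using w by (simp add: ln_div)
    finally have decay: "exp (- (x\<^sup>2 / 4)) * exp (L * \<bar>c\<bar>) \<le> w" .
    have "x\<^sup>2 * phi x * exp (L * \<bar>x\<bar>) \<le> gauss_tail L x"
      unfolding gauss_tail_def using phi_pos[of x] by (intro mult_right_mono) auto
    also have "\<dots> \<le> 9 * exp (4 * L\<^sup>2) * exp (- (x\<^sup>2 / 4))" by (rule gauss_tail_le)
    finally have "x\<^sup>2 * phi x * exp (L * \<bar>x\<bar>) * exp (L * \<bar>c\<bar>)
        \<le> 9 * exp (4 * L\<^sup>2) * (exp (- (x\<^sup>2 / 4)) * exp (L * \<bar>c\<bar>))"
      by (simp add: mult.assoc mult_right_mono)
    also have "\<dots> \<le> 9 * exp (4 * L\<^sup>2) * w" using decay by (intro mult_left_mono) auto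
    finally show ?thesis .
  qed
  have "x\<^sup>2 * ((1 - w) * phi x) / marginal w c x \<le> x\<^sup>2 * phi x / (w * (conv_lower * G))"
  proof (rule frac_le)
    show "x\<^sup>2 * ((1 - w) * phi x) \<le> x\<^sup>2 * phi x"
      using w phi_pos[of x] by (intro mult_left_mono) (auto simp: mult_le_cancel_right1)
    show "w * (conv_lower * G) \<le> marginal w c x"
      using conv_phi_ge[of x c] marginal_ge_conv_phi[of w c x] w unfolding G_def
      by (smt (verit) mult_left_mono)
  qed (use w B G phi_pos[of x] in auto)
  also have "\<dots> \<le> x\<^sup>2 * phi x * exp (L * \<bar>x\<bar>) * exp (L * \<bar>c\<bar>) / (w * (conv_lower * \<gamma> 0))"
    using mult_right_mono[OF G_lower, of "x\<^sup>2 * phi x"] w B G \<gamma>0 phi_pos[of x]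
    by (simp add: divide_simps ac_simps)
  also have "\<dots> \<le> 9 * exp (4 * L\<^sup>2) * w / (w * (conv_lower * \<gamma> 0))"
    using tail w B \<gamma>0 by (intro divide_right_mono) auto
  also have "\<dots> = 9 * exp (4 * L\<^sup>2) / (\<gamma> 0 * conv_lower)" using w by simp
  finally show ?thesis .
qed

lemma null_ratio_le:
  assumes w: "0 < w" "w \<le> 1"
  shows "x\<^sup>2 * ((1 - w) * phi x) / marginal w c x
    \<le> 9 * exp (4 * L\<^sup>2) / (\<gamma> 0 * conv_lower) + 4 * (1 + L) * (1 + \<bar>c\<bar> + ln (1 / w))"
proof -
  have K: "0 \<le> 9 * exp (4 * L\<^sup>2) / (\<gamma> 0 * conv_lower)"
    using density_pos[of 0] conv_lower_pos by simp
  have S: "0 \<le> 4 * (1 + L) * (1 + \<bar>c\<bar> + ln (1 / w))" using w L_pos by simp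
  show ?thesis
  proof (cases "ln (1 / w) + L * \<bar>c\<bar> \<le> x\<^sup>2 / 4")
    case True
    then show ?thesis using null_ratio_le_const[OF w True] S by linarith
  next
    case False
    then have "x\<^sup>2 \<le> 4 * ln (1 / w) + 4 * L * \<bar>c\<bar>" by simp
    also have "\<dots> \<le> 4 * (1 + L) * (1 + \<bar>c\<bar> + ln (1 / w))"
      using w L_pos by (simp add: algebra_simps)
    finally show ?thesis using null_ratio_le_sq[OF w, of x c] K by linarith
  qed
qed

theorem zeta_deriv_bound:
  "\<exists>C>0. \<forall>x w c. 0 < w \<and> w \<le> 1 \<longrightarrow>
     zeta \<gamma> w c differentiable at x \<and>
     \<bar>deriv (zeta \<gamma> w c) x\<bar> \<le> C * (1 + \<bar>c\<bar> + ln (1 / w))"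
proof -
  define R where "R = conv_upper / conv_lower"
  define K where "K = 9 * exp (4 * L\<^sup>2) / (\<gamma> 0 * conv_lower)"
  define C where "C = 3 * K + 12 * (1 + L) + R + 2 * R\<^sup>2 + 1"
  have R: "0 \<le> R" unfolding R_def using conv_upper_nonneg conv_lower_pos by simp
  have K: "0 \<le> K" unfolding K_def using density_pos[of 0] conv_lower_pos by simp
  have "0 < C" unfolding C_def using R K L_pos by (simp add: add_pos_nonneg)
  moreover have "zeta \<gamma> w c differentiable at x \<and>
      \<bar>deriv (zeta \<gamma> w c) x\<bar> \<le> C * (1 + \<bar>c\<bar> + ln (1 / w))" if w: "0 < w" "w \<le> 1" for x w c
  proof
    define m where "m = marginal w c x"
    define a where "a = (1 - w) * phi x"
    note deriv = zeta_has_real_derivative[OF w, of c x]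
    show "zeta \<gamma> w c differentiable at x"
      using deriv real_differentiable_def by blast
    have "m + marginal'' w c x - x\<^sup>2 * a = w * conv (\<lambda>s. s\<^sup>2 * phi s) c x"
      unfolding m_def a_def marginal_def marginal''_def conv_phi_add_conv_phi''[symmetric]
      by (simp add: phi''_def algebra_simps)
    then have "\<bar>m + marginal'' w c x - x\<^sup>2 * a\<bar> \<le> R * m"
      using weighted_conv_le[OF gaussian_dominated_sq_phi w, of c x] w
      unfolding m_def R_def by (simp add: abs_mult)
    moreover have "marginal' w c x + x * a = w * conv phi' c x"
      unfolding a_def marginal'_def by (simp add: phi'_def algebra_simps)
    then have "\<bar>marginal' w c x + x * a\<bar> \<le> R * m"
      using weighted_conv_le[OF gaussian_dominated_phi' w, of c x] w
      unfolding m_def R_def by (simp add: abs_mult)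
    ultimately have "\<bar>deriv (zeta \<gamma> w c) x\<bar> \<le> 3 * (x\<^sup>2 * a / m) + R + 2 * R\<^sup>2"
      using one_plus_log_second_deriv_bound[OF _ _ _ R] DERIV_imp_deriv[OF deriv]
        marginal_pos[OF w] marginal_ge_null[of w x c] w phi_pos[of x]
      unfolding m_def a_def by simp
    also have "\<dots> \<le> 3 * (K + 4 * (1 + L) * (1 + \<bar>c\<bar> + ln (1 / w))) + R + 2 * R\<^sup>2"
      using null_ratio_le[OF w, of x c] unfolding K_def a_def m_def by simp
    also have "\<dots> \<le> C * (1 + \<bar>c\<bar> + ln (1 / w))"
    proof -
      define S where "S = 1 + \<bar>c\<bar> + ln (1 / w)"
      have "1 \<le> S" unfolding S_def using w by simp
      then have "3 * K + R + 2 * R\<^sup>2 \<le> (3 * K + R + 2 * R\<^sup>2) * S"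
        using K R mult_left_mono[of 1 S "3 * K + R + 2 * R\<^sup>2"] by simp
      then show ?thesis using \<open>1 \<le> S\<close> unfolding C_def S_def[symmetric] by (simp add: algebra_simps)
    qed
    finally show "\<bar>deriv (zeta \<gamma> w c) x\<bar> \<le> C * (1 + \<bar>c\<bar> + ln (1 / w))" .
  qed
  ultimately show ?thesis by blast
qed

end


section \<open>The two prior families\<close>

lemma log_lipschitz_density_if_log_deriv_bounded:
  assumes density: "prob_density \<gamma>" and pos: "\<And>u. 0 < \<gamma> u" and L: "0 < L"
    and log_deriv: "\<And>u. ((\<lambda>t. ln (\<gamma> t)) has_real_derivative \<psi> u) (at u)"
    and log_deriv_bound: "\<And>u. \<bar>\<psi> u\<bar> \<le> L"
  shows "log_lipschitz_density \<gamma> L"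
proof
  show "\<gamma> \<in> borel_measurable borel" "integrable lborel \<gamma>"
    using density unfolding prob_density_def by auto
  fix u v
  have "\<bar>ln (\<gamma> u) - ln (\<gamma> v)\<bar> \<le> L * \<bar>u - v\<bar>"
    using field_differentiable_bound[OF convex_UNIV, of "\<lambda>t. ln (\<gamma> t)" \<psi> L u v]
      log_deriv log_deriv_bound by auto
  then have "exp (ln (\<gamma> u)) \<le> exp (ln (\<gamma> v) + L * \<bar>u - v\<bar>)" by simp
  then show "\<gamma> u \<le> \<gamma> v * exp (L * \<bar>u - v\<bar>)" using pos[of u] pos[of v] by (simp add: exp_add)
qed (use pos L in auto)

lemma integrable_laplace_density:
  assumes L: "0 < (L::real)"
  shows "integrable lborel (\<lambda>u. L / 2 * exp (- L * \<bar>u\<bar>))"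
proof -
  have exponential: "integrable lborel (exponential_density L)"
  proof (rule integrableI_nonneg)
    show "exponential_density L \<in> borel_measurable lborel"
      unfolding exponential_density_def[abs_def] by measurable
    show "AE x in lborel. 0 \<le> exponential_density L x"
      using L by (auto intro!: AE_I2 simp: exponential_density_def)
    have "(\<integral>\<^sup>+ x. ennreal (exponential_density L x * x ^ 0) \<partial>lborel) = fact (0 + 0) / (fact 0 * L ^ 0)"
      by (rule nn_integral_erlang_ith_moment[OF L])
    then show "(\<integral>\<^sup>+ x. ennreal (exponential_density L x) \<partial>lborel) < \<infinity>" by simp
  qed
  have "integrable lborel (\<lambda>u. exponential_density L u + exponential_density L (0 - u))"
    using exponential integrable_reflect_shift[OF exponential, of 0] by (rule Bochner_Integration.integrable_add)
  then show ?thesis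
  proof (rule Bochner_Integration.integrable_bound)
    show "(\<lambda>u. L / 2 * exp (- L * \<bar>u\<bar>)) \<in> borel_measurable lborel" by measurable
    show "AE x in lborel. norm (L / 2 * exp (- L * \<bar>x\<bar>)) \<le>
        norm (exponential_density L x + exponential_density L (0 - x))"
      using L by (auto intro!: AE_I2 simp: exponential_density_def mult.commute)
  qed
qed

lemma log_lipschitz_density_laplace:
  assumes L: "0 < L"
  shows "log_lipschitz_density (\<lambda>u. L / 2 * exp (- L * \<bar>u\<bar>)) L"
proof
  fix u v :: real
  have "- L * \<bar>u\<bar> \<le> - L * \<bar>v\<bar> + L * \<bar>u - v\<bar>"
    using L mult_left_mono[of "\<bar>v\<bar>" "\<bar>u\<bar> + \<bar>u - v\<bar>" L] by (simp add: algebra_simps)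
  then have "exp (- L * \<bar>u\<bar>) \<le> exp (- L * \<bar>v\<bar>) * exp (L * \<bar>u - v\<bar>)"
    by (simp add: exp_add[symmetric])
  then show "L / 2 * exp (- L * \<bar>u\<bar>) \<le> L / 2 * exp (- L * \<bar>v\<bar>) * exp (L * \<bar>u - v\<bar>)"
    using L by (simp add: mult.assoc)
qed (use L integrable_laplace_density in auto)

theorem mainTheorem10:
  shows
  "(\<forall>(gamma0 :: real \<Rightarrow> real) (psi :: real \<Rightarrow> real) (Lam :: real) (Lam' :: real).
      prob_density gamma0 \<and> (\<forall>u. 0 < gamma0 u)
      \<and> (\<forall>u. gamma0 (- u) = gamma0 u)
      \<and> (\<forall>u v. 0 \<le> u \<and> u \<le> v \<longrightarrow> gamma0 v \<le> gamma0 u)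
      \<and> 0 < Lam \<and> 0 < Lam'
      \<and> (\<forall>u. ((\<lambda>t. ln (gamma0 t)) has_real_derivative psi u) (at u))
      \<and> (\<forall>u. \<bar>psi u\<bar> \<le> Lam)
      \<and> (\<forall>u v. \<bar>psi u - psi v\<bar> \<le> Lam' * \<bar>u - v\<bar>)
      \<longrightarrow> (\<exists>C>0. \<forall>x w c. 0 < w \<and> w \<le> 1 \<longrightarrow>
              zeta gamma0 w c differentiable at x \<and>
              \<bar>deriv (zeta gamma0 w c) x\<bar> \<le> C * (1 + \<bar>c\<bar> + ln (1 / w))))
   \<and>
   (\<forall>Lam :: real. 0 < Lam \<longrightarrow>
      (let gamma0 = (\<lambda>u. Lam / 2 * exp (- Lam * \<bar>u\<bar>)) in
       \<exists>C>0. \<forall>x w c. 0 < w \<and> w \<le> 1 \<longrightarrow>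
              zeta gamma0 w c differentiable at x \<and>
              \<bar>deriv (zeta gamma0 w c) x\<bar> \<le> C * (1 + \<bar>c\<bar> + ln (1 / w))))"
  using log_lipschitz_density.zeta_deriv_bound[OF log_lipschitz_density_if_log_deriv_bounded]
    log_lipschitz_density.zeta_deriv_bound[OF log_lipschitz_density_laplace]
  unfolding Let_def by blast

end
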